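(* Let $\alpha>0$ and $\Delta=\sqrt{1+\alpha^2}$. Let $\gamma_1(\theta)=(\cos\theta,\sin\theta,0)$ be the unit circle and $\gamma_2(\phi)=(\alpha\cos\phi+\Delta,0,\alpha\sin\phi)$ the circle of radius $\alpha$ in the $xz$-plane centered at $(\Delta,0,0)$. Then their Möbius cross-energy equals $4\pi^2$, i.e. $$2\int_0^{2\pi}\!\!\int_0^{2\pi}\frac{\alpha\,d\theta\,d\phi}{\left(\alpha\cos\theta+\sqrt{1+\alpha^2}-\cos\phi\right)^2+\sin^2\phi+\alpha^2\sin^2\theta}=4\pi^2 .$$
   Context: The Möbius cross-energy of two disjoint closed curves $\gamma_i,\gamma_j$ in $\mathbb R^3$ is taken with the convention that each pair of line elements is counted twice: $E_c=2\int\int \frac{|\dot\gamma_i(u)||\dot\gamma_j(v)|}{|\gamma_i(u)-\gamma_j(v)|^2}\,du\,dv$. *)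

theory Defs
  imports "HOL-Analysis.Analysis"
begin

text \<open>Moebius cross-energy of two closed curves parametrised over [0, 2 pi],
  each pair of line elements counted twice.\<close>
definition mobius_cross_energy ::
  "(real \<Rightarrow> real^3) \<Rightarrow> (real \<Rightarrow> real^3) \<Rightarrow> real" where
  "mobius_cross_energy g1 g2 =
     2 * integral (cbox (0, 0) (2 * pi, 2 * pi))
       (\<lambda>(u, v). norm (vector_derivative g1 (at u)) * norm (vector_derivative g2 (at v))
                 / (norm (g1 u - g2 v))\<^sup>2)"

definition circ1 :: "real \<Rightarrow> real^3" where
  "circ1 \<theta> = vector [cos \<theta>, sin \<theta>, 0]"

definition circ2 :: "real \<Rightarrow> real \<Rightarrow> real^3" where
  "circ2 \<alpha> \<phi> = vector [\<alpha> * cos \<phi> + sqrt (1 + \<alpha>\<^sup>2), 0, \<alpha> * sin \<phi>]"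

end

theory Submission
  imports Defs
begin

text \<open>With \<open>\<Delta> = sqrt (1 + \<alpha>\<^sup>2)\<close> the squared distance between the points of the two circles
  factors as \<open>2 (\<Delta> + \<alpha> cos \<phi>) (\<Delta> - cos \<theta>)\<close>, so the integrand is a product of a function
  of \<open>\<theta>\<close> and a function of \<open>\<phi>\<close>. Each factor is a rescaled Poisson kernel: the integral of
  \<open>1 / (A + B cos t)\<close> over a period is \<open>2 pi / sqrt (A\<^sup>2 - B\<^sup>2)\<close>, which here gives
  \<open>2 pi / \<alpha>\<close> and \<open>2 pi\<close>.\<close>

lemma affine_cos_pos:
  fixes A B :: real assumes "\<bar>B\<bar> < A"
  shows "A + B * cos t > 0"
proof -
  have "\<bar>B * cos t\<bar> \<le> \<bar>B\<bar>"
    using abs_cos_le_one[of t] by (simp add: abs_mult mult_left_le)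
  then show ?thesis
    using assms by linarith
qed

text \<open>Since \<open>1 - r cos t > 0\<close>, this antiderivative of the Poisson kernel is smooth on the
  whole line, unlike the usual one built from \<open>tan (t/2)\<close>.\<close>

lemma has_real_derivative_poisson_antiderivative:
  fixes r :: real assumes "\<bar>r\<bar> < 1"
  shows "((\<lambda>t. t + 2 * arctan (r * sin t / (1 - r * cos t))) has_real_derivative
          (1 - r\<^sup>2) / (1 - 2 * r * cos t + r\<^sup>2)) (at t)"
proof -
  have pos: "1 - r * cos t > 0"
    using affine_cos_pos[of "- r" 1 t] assms by simp
  have denom: "(1 - r * cos t)\<^sup>2 + (r * sin t)\<^sup>2 = 1 - 2 * r * cos t + r\<^sup>2"
    using sin_cos_squared_add[of t] by algebra
  have numer: "r * cos t * (1 - r * cos t) - r * sin t * (r * sin t) = r * cos t - r\<^sup>2"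
    using sin_cos_squared_add[of t] by algebra
  have "((\<lambda>t. r * sin t / (1 - r * cos t)) has_real_derivative
          (r * cos t - r\<^sup>2) / (1 - r * cos t)\<^sup>2) (at t)"
    using pos numer by (auto intro!: derivative_eq_intros simp: power2_eq_square mult.commute)
  from DERIV_arctan[THEN DERIV_chain2, OF this]
  have "((\<lambda>t. arctan (r * sin t / (1 - r * cos t))) has_real_derivative
          inverse (1 + (r * sin t / (1 - r * cos t))\<^sup>2) * ((r * cos t - r\<^sup>2) / (1 - r * cos t)\<^sup>2)) (at t)" .
  moreover have "inverse (1 + (y / x)\<^sup>2) * (n / x\<^sup>2) = n / (x\<^sup>2 + y\<^sup>2)"
    if "x \<noteq> 0" for x y n :: real
    using that by (simp add: field_simps)
  ultimately have "((\<lambda>t. arctan (r * sin t / (1 - r * cos t))) has_real_derivative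
          (r * cos t - r\<^sup>2) / (1 - 2 * r * cos t + r\<^sup>2)) (at t)"
    using pos by (simp add: denom)
  then have "((\<lambda>t. t + 2 * arctan (r * sin t / (1 - r * cos t))) has_real_derivative
          1 + 2 * ((r * cos t - r\<^sup>2) / (1 - 2 * r * cos t + r\<^sup>2))) (at t)"
    by (rule DERIV_add[OF DERIV_ident DERIV_cmult])
  moreover have "1 - 2 * r * cos t + r\<^sup>2 > 0"
    using pos denom by (metis add_pos_nonneg zero_le_power2 zero_less_power2 less_irrefl)
  ultimately show ?thesis
    by (simp add: field_simps)
qed

lemma has_integral_poisson_kernel:
  fixes r :: real assumes "\<bar>r\<bar> < 1"
  shows "((\<lambda>t. (1 - r\<^sup>2) / (1 - 2 * r * cos t + r\<^sup>2)) has_integral 2 * pi) {0..2 * pi}"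
proof -
  have "((\<lambda>t. (1 - r\<^sup>2) / (1 - 2 * r * cos t + r\<^sup>2)) has_integral
          (2 * pi + 2 * arctan (r * sin (2 * pi) / (1 - r * cos (2 * pi))))
          - (0 + 2 * arctan (r * sin 0 / (1 - r * cos 0)))) {0..2 * pi}"
    using has_real_derivative_poisson_antiderivative[OF assms]
    by (intro fundamental_theorem_of_calculus)
       (auto simp: has_real_derivative_iff_has_vector_derivative has_vector_derivative_at_within)
  then show ?thesis
    by simp
qed

lemma has_integral_inverse_affine_cos:
  fixes A B :: real assumes "\<bar>B\<bar> < A"
  shows "((\<lambda>t. 1 / (A + B * cos t)) has_integral 2 * pi / sqrt (A\<^sup>2 - B\<^sup>2)) {0..2 * pi}"
proof -
  define s where "s = sqrt (A\<^sup>2 - B\<^sup>2)"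
  \<comment> \<open>the root of \<open>B r\<^sup>2 + 2 A r + B = 0\<close> in the unit disc, making \<open>1 - 2 r cos t + r\<^sup>2\<close>
    proportional to \<open>A + B cos t\<close>\<close>
  define r where "r = - B / (A + s)"
  have "\<bar>B\<bar>\<^sup>2 < A\<^sup>2"
    using assms by (intro power_strict_mono) auto
  then have s2: "s\<^sup>2 = A\<^sup>2 - B\<^sup>2" and "s > 0"
    by (auto simp: s_def)
  have As: "A + s > 0"
    using assms \<open>s > 0\<close> by linarith
  have r: "\<bar>r\<bar> < 1"
    using assms As \<open>s > 0\<close> by (simp add: r_def abs_div abs_less_iff field_simps)
  have "1 / (A + B * cos t) = (1 / s) * ((1 - r\<^sup>2) / (1 - 2 * r * cos t + r\<^sup>2))" for t
  proof -
    have "r * (A + s) = - B"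
      using As by (simp add: r_def)
    then have "(A + s)\<^sup>2 * ((1 - r\<^sup>2) * (A + B * cos t) - s * (1 - 2 * r * cos t + r\<^sup>2)) = 0"
      using s2 by algebra
    then have eq: "(1 - r\<^sup>2) * (A + B * cos t) = s * (1 - 2 * r * cos t + r\<^sup>2)"
      using As by simp
    have "A + B * cos t > 0"
      using affine_cos_pos[OF assms] .
    moreover have "1 - r\<^sup>2 > 0"
      using r by (simp add: abs_square_less_1)
    ultimately show ?thesis
      by (simp add: eq[symmetric])
  qed
  then show ?thesis
    using has_integral_mult_right[OF has_integral_poisson_kernel[OF r], of "1 / s"]
    by (simp add: s_def)
qed

lemma integral_cbox_Pair_mult:
  fixes f g :: "real \<Rightarrow> real"
  assumes "continuous_on {a..b} f" and "continuous_on {c..d} g"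
  shows "integral (cbox (a, c) (b, d)) (\<lambda>(u, v). f u * g v)
           = integral {a..b} f * integral {c..d} g"
proof -
  have "continuous_on (cbox (a, c) (b, d)) (\<lambda>(u, v). f u * g v)"
    unfolding cbox_Pair_eq case_prod_unfold using assms
    by (intro continuous_intros continuous_on_compose2[OF assms(1)] continuous_on_compose2[OF assms(2)])
       (auto simp: mem_Times_iff)
  then have "integral (cbox (a, c) (b, d)) (\<lambda>(u, v). f u * g v)
               = integral {a..b} (\<lambda>u. integral {c..d} (\<lambda>v. f u * g v))"
    by (simp add: integral_prod_continuous)
  then show ?thesis
    by (simp add: integral_mult_left)
qed

lemma norm_vector3: "norm (vector [x, y, z] :: real^3) = sqrt (x\<^sup>2 + y\<^sup>2 + z\<^sup>2)"
  unfolding norm_eq_sqrt_inner inner_vec_def sum_3 by (simp add: power2_eq_square)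

lemma has_vector_derivative_vector3:
  assumes "(f has_real_derivative f') (at t)" "(g has_real_derivative g') (at t)"
    and "(h has_real_derivative h') (at t)"
  shows "((\<lambda>t. vector [f t, g t, h t] :: real^3) has_vector_derivative vector [f', g', h']) (at t)"
proof -
  have decomp: "(vector [x, y, z] :: real^3)
      = x *\<^sub>R vector [1, 0, 0] + y *\<^sub>R vector [0, 1, 0] + z *\<^sub>R vector [0, 0, 1]" for x y z
    by (auto simp: vec_eq_iff forall_3)
  have "(\<lambda>t. vector [f t, g t, h t] :: real^3)
      = (\<lambda>t. f t *\<^sub>R vector [1, 0, 0] + g t *\<^sub>R vector [0, 1, 0] + h t *\<^sub>R vector [0, 0, 1])"
    by (rule ext, rule decomp)
  then show ?thesis
    unfolding decomp[of f' g' h'] using assms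
    unfolding has_real_derivative_iff_has_vector_derivative
    by (simp only:)
      (intro has_vector_derivative_add bounded_linear.has_vector_derivative[OF bounded_linear_scaleR_left])
qed

lemma norm_derivative_circ1: "norm (vector_derivative circ1 (at u)) = 1"
proof -
  have "(circ1 has_vector_derivative vector [- sin u, cos u, 0]) (at u)"
    unfolding circ1_def by (rule has_vector_derivative_vector3) (auto intro!: derivative_eq_intros)
  then have "vector_derivative circ1 (at u) = vector [- sin u, cos u, 0]"
    by (rule vector_derivative_at)
  then show ?thesis
    by (simp add: norm_vector3)
qed

lemma norm_derivative_circ2: "norm (vector_derivative (circ2 \<alpha>) (at v)) = \<bar>\<alpha>\<bar>"
proof -
  have "(circ2 \<alpha> has_vector_derivative vector [- \<alpha> * sin v, 0, \<alpha> * cos v]) (at v)"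
    unfolding circ2_def by (rule has_vector_derivative_vector3) (auto intro!: derivative_eq_intros)
  then have "vector_derivative (circ2 \<alpha>) (at v) = vector [- \<alpha> * sin v, 0, \<alpha> * cos v]"
    by (rule vector_derivative_at)
  moreover have "(- \<alpha> * sin v)\<^sup>2 + 0\<^sup>2 + (\<alpha> * cos v)\<^sup>2 = \<alpha>\<^sup>2"
    by (simp add: power_mult_distrib algebra_simps flip: distrib_left)
  ultimately show ?thesis
    by (simp add: norm_vector3)
qed

lemma norm_circ1_minus_circ2_squared:
  "(norm (circ1 u - circ2 \<alpha> v))\<^sup>2
     = 2 * (sqrt (1 + \<alpha>\<^sup>2) + \<alpha> * cos v) * (sqrt (1 + \<alpha>\<^sup>2) - cos u)"
proof -
  define \<Delta> where "\<Delta> = sqrt (1 + \<alpha>\<^sup>2)"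
  have "\<Delta>\<^sup>2 = 1 + \<alpha>\<^sup>2"
    by (simp add: \<Delta>_def add_pos_nonneg)
  moreover have "circ1 u - circ2 \<alpha> v = vector [cos u - \<alpha> * cos v - \<Delta>, sin u, - \<alpha> * sin v]"
    by (auto simp: vec_eq_iff forall_3 circ1_def circ2_def \<Delta>_def)
  then have "(norm (circ1 u - circ2 \<alpha> v))\<^sup>2
      = (cos u - \<alpha> * cos v - \<Delta>)\<^sup>2 + (sin u)\<^sup>2 + (- \<alpha> * sin v)\<^sup>2"
    by (simp add: norm_vector3 add_nonneg_nonneg)
  ultimately show ?thesis
    unfolding \<Delta>_def[symmetric] power_mult_distrib sin_squared_eq
    by (simp add: power2_eq_square algebra_simps)
qed

theorem mainTheorem2:
  fixes \<alpha> :: real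
  assumes "\<alpha> > 0"
  shows "mobius_cross_energy circ1 (circ2 \<alpha>) = 4 * pi\<^sup>2"
proof -
  define \<Delta> where "\<Delta> = sqrt (1 + \<alpha>\<^sup>2)"
  have "\<Delta>\<^sup>2 = 1 + \<alpha>\<^sup>2" "\<alpha> < \<Delta>" "1 < \<Delta>"
    using assms by (auto simp: \<Delta>_def add_pos_nonneg intro!: real_less_rsqrt)
  then have "\<bar>-1\<bar> < \<Delta>" "\<bar>\<alpha>\<bar> < \<Delta>" "sqrt (\<Delta>\<^sup>2 - 1) = \<alpha>" "sqrt (\<Delta>\<^sup>2 - \<alpha>\<^sup>2) = 1"
    using assms by auto
  then have I1: "((\<lambda>u. 1 / (\<Delta> - cos u)) has_integral 2 * pi / \<alpha>) {0..2 * pi}"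
    and I2: "((\<lambda>v. 1 / (\<Delta> + \<alpha> * cos v)) has_integral 2 * pi) {0..2 * pi}"
    using has_integral_inverse_affine_cos by fastforce+
  have "integral {0..2 * pi} (\<lambda>u. \<alpha> / 2 * (1 / (\<Delta> - cos u))) = \<alpha> / 2 * (2 * pi / \<alpha>)"
    using has_integral_mult_right[OF I1] by (rule integral_unique)
  then have int_u: "integral {0..2 * pi} (\<lambda>u. \<alpha> / 2 * (1 / (\<Delta> - cos u))) = pi"
    using assms by simp
  have int_v: "integral {0..2 * pi} (\<lambda>v. 1 / (\<Delta> + \<alpha> * cos v)) = 2 * pi"
    using I2 by (rule integral_unique)
  have cont_u: "continuous_on {0..2 * pi} (\<lambda>u. \<alpha> / 2 * (1 / (\<Delta> - cos u)))"
    and cont_v: "continuous_on {0..2 * pi} (\<lambda>v. 1 / (\<Delta> + \<alpha> * cos v))"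
    using affine_cos_pos[OF \<open>\<bar>-1\<bar> < \<Delta>\<close>] affine_cos_pos[OF \<open>\<bar>\<alpha>\<bar> < \<Delta>\<close>]
    by (auto intro!: continuous_intros simp: less_imp_neq[symmetric])
  have integrand: "(\<lambda>(u, v). norm (vector_derivative circ1 (at u))
                     * norm (vector_derivative (circ2 \<alpha>) (at v)) / (norm (circ1 u - circ2 \<alpha> v))\<^sup>2)
      = (\<lambda>(u, v). \<alpha> / 2 * (1 / (\<Delta> - cos u)) * (1 / (\<Delta> + \<alpha> * cos v)))"
    using assms
    by (simp add: norm_derivative_circ1 norm_derivative_circ2 norm_circ1_minus_circ2_squared
        \<Delta>_def algebra_simps)
  show ?thesis
    unfolding mobius_cross_energy_def integrand integral_cbox_Pair_mult[OF cont_u cont_v] int_u int_v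
    by (simp add: power2_eq_square)
qed

end
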